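(* Let $X=(X_1,\dots,X_p)$ be generated by a QVF-DAG model with DAG $\mathcal G=(\mathcal V,\mathcal E)$, and assume Condition 1 holds. Fix a node $j\in\mathcal V$ with $\beta_{j2}>-1$. Then for every set $\mathcal S\subseteq \mathrm{nd}_j$, $$E\big[\mathrm{Var}(\omega_j(\mathcal S)X_j\mid X_{\mathcal S})\big]\;\ge\; E\big[\omega_j(\mathcal S)X_j\big],$$ and equality holds if and only if $\mathrm{pa}_j\subseteq\mathcal S$.
   Context: A DAG $\mathcal G=(\mathcal V,\mathcal E)$ on $\mathcal V=\{1,\dots,p\}$; $\mathrm{pa}_j$ is the set of parents of node $j$, and $\mathrm{nd}_j$ is the set of non-descendants of $j$ excluding $j$ itself. For $\mathcal S\subseteq\mathcal V$, $X_{\mathcal S}=(X_k)_{k\in\mathcal S}$ (with $X_\emptyset$ trivial, so conditioning on it is unconditional). The joint law of $X$ is Markov with respect to $\mathcal G$, i.e. $P(X)=\prod_{j\in\mathcal V}P(X_j\mid X_{\mathrm{pa}_j})$. QVF property: for each $j$ there are constants $\beta_{j1},\beta_{j2}$ with $\mathrm{Var}(X_j\mid X_{\mathrm{pa}_j})=\beta_{j1}E[X_j\mid X_{\mathrm{pa}_j}]+\beta_{j2}\big(E[X_j\mid X_{\mathrm{pa}_j}]\big)^2$. All moments appearing are assumed finite. For $\mathcal S\subseteq\mathrm{nd}_j$ define $\omega_j(\mathcal S)=\big(\beta_{j1}+\beta_{j2}E[X_j\mid X_{\mathcal S}]\big)^{-1}$. Condition 1: for every node $j$ and every $\mathcal S\subseteq\mathrm{nd}_j$,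 $\beta_{j1}+\beta_{j2}E[X_j\mid X_{\mathcal S}]\neq 0$ almost surely (so $\omega_j(\mathcal S)$ is well defined), and whenever $\mathrm{pa}_j\not\subseteq\mathcal S\subseteq\mathrm{nd}_j$, one has $E\big[\omega_j^2(\mathcal S)\,\mathrm{Var}\big(E[X_j\mid X_{\mathrm{pa}_j}]\mid X_{\mathcal S}\big)\big]>0$. *)

theory Defs
  imports "HOL-Probability.Probability"
begin

definition parents :: "(nat \<times> nat) set \<Rightarrow> nat \<Rightarrow> nat set" where
  "parents E j = {i. (i, j) \<in> E}"

definition descendants :: "(nat \<times> nat) set \<Rightarrow> nat \<Rightarrow> nat set" where
  "descendants E j = {k. (j, k) \<in> E\<^sup>+}"

definition nondesc :: "nat set \<Rightarrow> (nat \<times> nat) set \<Rightarrow> nat \<Rightarrow> nat set" where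
  "nondesc V E j = V - descendants E j - {j}"

definition is_dag :: "nat set \<Rightarrow> (nat \<times> nat) set \<Rightarrow> bool" where
  "is_dag V E \<longleftrightarrow> finite V \<and> E \<subseteq> V \<times> V \<and> acyclic E"

text \<open>The sigma-algebra generated by X_S = (X_k)_{k in S}; for S = {} it is the
  trivial sigma-algebra {{}, space M}.\<close>
definition gen_sigma :: "'a measure \<Rightarrow> (nat \<Rightarrow> 'a \<Rightarrow> real) \<Rightarrow> nat set \<Rightarrow> 'a measure" where
  "gen_sigma M X S = sigma (space M) {X k -` B \<inter> space M | k B. k \<in> S \<and> B \<in> sets borel}"

definition cexp :: "'a measure \<Rightarrow> (nat \<Rightarrow> 'a \<Rightarrow> real) \<Rightarrow> nat set \<Rightarrow> ('a \<Rightarrow> real) \<Rightarrow> 'a \<Rightarrow> real" where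
  "cexp M X S Y = real_cond_exp M (gen_sigma M X S) Y"

definition cvar :: "'a measure \<Rightarrow> (nat \<Rightarrow> 'a \<Rightarrow> real) \<Rightarrow> nat set \<Rightarrow> ('a \<Rightarrow> real) \<Rightarrow> 'a \<Rightarrow> real" where
  "cvar M X S Y = (\<lambda>x. cexp M X S (\<lambda>w. (Y w)\<^sup>2) x - (cexp M X S Y x)\<^sup>2)"

text \<open>Markov property w.r.t. the DAG (directed local Markov property, equivalent to
  the factorization P(X) = prod_j P(X_j | X_pa_j)): the conditional law of X_j given
  X_{nd_j} coincides a.s. with its conditional law given X_{pa_j}.\<close>
definition dag_markov :: "'a measure \<Rightarrow> nat set \<Rightarrow> (nat \<times> nat) set \<Rightarrow> (nat \<Rightarrow> 'a \<Rightarrow> real) \<Rightarrow> bool" where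
  "dag_markov M V E X \<longleftrightarrow>
     (\<forall>j\<in>V. \<forall>B\<in>sets borel.
        AE x in M. cexp M X (nondesc V E j) (\<lambda>w. indicator B (X j w)) x
                 = cexp M X (parents E j) (\<lambda>w. indicator B (X j w)) x)"

definition qvf :: "'a measure \<Rightarrow> nat set \<Rightarrow> (nat \<times> nat) set \<Rightarrow> (nat \<Rightarrow> 'a \<Rightarrow> real)
                    \<Rightarrow> (nat \<Rightarrow> real) \<Rightarrow> (nat \<Rightarrow> real) \<Rightarrow> bool" where
  "qvf M V E X b1 b2 \<longleftrightarrow>
     (\<forall>j\<in>V. AE x in M. cvar M X (parents E j) (X j) x
        = b1 j * cexp M X (parents E j) (X j) x + b2 j * (cexp M X (parents E j) (X j) x)\<^sup>2)"

definition omega :: "'a measure \<Rightarrow> (nat \<Rightarrow> 'a \<Rightarrow> real) \<Rightarrow> (nat \<Rightarrow> real) \<Rightarrow> (nat \<Rightarrow> real)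
                      \<Rightarrow> nat \<Rightarrow> nat set \<Rightarrow> 'a \<Rightarrow> real" where
  "omega M X b1 b2 j S = (\<lambda>x. 1 / (b1 j + b2 j * cexp M X S (X j) x))"

definition condition1 :: "'a measure \<Rightarrow> nat set \<Rightarrow> (nat \<times> nat) set \<Rightarrow> (nat \<Rightarrow> 'a \<Rightarrow> real)
                    \<Rightarrow> (nat \<Rightarrow> real) \<Rightarrow> (nat \<Rightarrow> real) \<Rightarrow> bool" where
  "condition1 M V E X b1 b2 \<longleftrightarrow>
     (\<forall>j\<in>V. \<forall>S. S \<subseteq> nondesc V E j \<longrightarrow>
        (AE x in M. b1 j + b2 j * cexp M X S (X j) x \<noteq> 0) \<and>
        (\<not> parents E j \<subseteq> S \<longrightarrow>
           prob_space.expectation M (\<lambda>x. (omega M X b1 b2 j S x)\<^sup>2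
              * cvar M X S (cexp M X (parents E j) (X j)) x) > 0))"

end

theory Submission
  imports Defs
begin

text \<open>Since \<open>\<omega>\<^sub>j(S)\<close> is \<open>X\<^sub>S\<close>-measurable, \<open>Var(\<omega> X\<^sub>j | X\<^sub>S) = \<omega>\<^sup>2 Var(X\<^sub>j | X\<^sub>S)\<close>.
  By the Markov property the law of \<open>X\<^sub>j\<close> given \<open>X\<^sub>S\<close> factors through \<open>X\<^bsub>pa\<^esub>\<close>, so the
  conditional moments of \<open>X\<^sub>j\<close> given \<open>X\<^sub>S\<close> are those of \<open>\<mu> = E[X\<^sub>j | X\<^bsub>pa\<^esub>]\<close> and of
  \<open>E[X\<^sub>j\<^sup>2 | X\<^bsub>pa\<^esub>] = \<beta>\<^sub>1 \<mu> + (1 + \<beta>\<^sub>2) \<mu>\<^sup>2\<close>.  This gives the law of total variance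
  \<open>Var(X\<^sub>j | X\<^sub>S) = \<mu>\<^sub>S (\<beta>\<^sub>1 + \<beta>\<^sub>2 \<mu>\<^sub>S) + (1 + \<beta>\<^sub>2) Var(\<mu> | X\<^sub>S)\<close> with \<open>\<mu>\<^sub>S = E[X\<^sub>j | X\<^sub>S]\<close>;
  multiplying by \<open>\<omega>\<^sup>2 = (\<beta>\<^sub>1 + \<beta>\<^sub>2 \<mu>\<^sub>S)\<^sup>-\<^sup>2\<close> and integrating,
  \<open>E[Var(\<omega> X\<^sub>j | X\<^sub>S)] = E[\<omega> X\<^sub>j] + (1 + \<beta>\<^sub>2) E[\<omega>\<^sup>2 Var(\<mu> | X\<^sub>S)]\<close>.  The last expectation
  vanishes if \<open>pa\<^sub>j \<subseteq> S\<close> (then \<open>\<mu>\<close> is \<open>X\<^sub>S\<close>-measurable) and is positive otherwise by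
  Condition 1.

  The Markov property is only assumed for indicators \<open>1\<^sub>B(X\<^sub>j)\<close>; it extends to all
  integrable \<open>f(X\<^sub>j)\<close> because, for \<open>A \<in> \<sigma>(X\<^bsub>nd\<^esub>)\<close>, the densities \<open>1\<^sub>A\<close> and
  \<open>E[1\<^sub>A | X\<^bsub>pa\<^esub>]\<close> then induce the same distribution of \<open>X\<^sub>j\<close>.\<close>

lemma parents_subset_nondesc:
  assumes "is_dag V E"
  shows "parents E j \<subseteq> nondesc V E j"
proof
  fix i assume "i \<in> parents E j"
  then have ij: "(i, j) \<in> E" unfolding parents_def by auto
  have dag: "E \<subseteq> V \<times> V" "acyclic E" using assms unfolding is_dag_def by auto
  have "(j, i) \<notin> E\<^sup>+"
  proof
    assume "(j, i) \<in> E\<^sup>+"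
    then have "(j, j) \<in> E\<^sup>+" using ij by (rule trancl_into_trancl)
    then show False using dag(2) unfolding acyclic_def by auto
  qed
  moreover have "i \<noteq> j" using ij dag(2) unfolding acyclic_def by auto
  ultimately show "i \<in> nondesc V E j"
    using ij dag(1) unfolding nondesc_def descendants_def by auto
qed

lemma space_gen_sigma [simp]: "space (gen_sigma M X S) = space M"
  unfolding gen_sigma_def by (simp add: space_measure_of_conv)

lemma sets_gen_sigma:
  "sets (gen_sigma M X S) = sigma_sets (space M) {X k -` B \<inter> space M | k B. k \<in> S \<and> B \<in> sets borel}"
  unfolding gen_sigma_def by (rule sets_measure_of) auto

lemma subalgebra_gen_sigma:
  assumes "\<And>k. k \<in> S \<Longrightarrow> X k \<in> borel_measurable M"
  shows "subalgebra M (gen_sigma M X S)"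
  unfolding subalgebra_def sets_gen_sigma
  using assms by (auto intro!: sets.sigma_sets_subset measurable_sets)

lemma subalgebra_gen_sigma_mono:
  assumes "S \<subseteq> T"
  shows "subalgebra (gen_sigma M X T) (gen_sigma M X S)"
  unfolding subalgebra_def sets_gen_sigma
  using assms by (intro conjI sigma_sets_mono') auto

lemma (in finite_measure) finite_measure_subalgebra_gen_sigma:
  assumes "\<And>k. k \<in> S \<Longrightarrow> X k \<in> borel_measurable M"
  shows "finite_measure_subalgebra M (gen_sigma M X S)"
  by unfold_locales (rule subalgebra_gen_sigma[OF assms])

lemma integral_density_comp_eq:
  fixes g h :: "'a \<Rightarrow> real" and f :: "'b \<Rightarrow> real"
  assumes "finite_measure M"
    and [measurable]: "Y \<in> M \<rightarrow>\<^sub>M N" "g \<in> borel_measurable M" "h \<in> borel_measurable M"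
      "f \<in> borel_measurable N"
    and g_bounds: "AE x in M. 0 \<le> g x \<and> g x \<le> 1" and h_bounds: "AE x in M. 0 \<le> h x \<and> h x \<le> 1"
    and indicator_eq: "\<And>B. B \<in> sets N \<Longrightarrow>
      (\<integral>x. g x * indicator B (Y x) \<partial>M) = (\<integral>x. h x * indicator B (Y x) \<partial>M)"
  shows "(\<integral>x. g x * f (Y x) \<partial>M) = (\<integral>x. h x * f (Y x) \<partial>M)"
proof -
  interpret finite_measure M by fact
  have emeasure_distr_density:
    "emeasure (distr (density M d) N Y) B = ennreal (\<integral>x. d x * indicator B (Y x) \<partial>M)"
    if [measurable]: "d \<in> borel_measurable M" "B \<in> sets N"
      and bounds: "AE x in M. 0 \<le> d x \<and> d x \<le> 1" for d B
  proof -
    have "emeasure (distr (density M d) N Y) B = (\<integral>\<^sup>+ x. ennreal (d x * indicator B (Y x)) \<partial>M)"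
      by (simp add: emeasure_distr emeasure_density)
        (auto intro!: nn_integral_cong split: split_indicator)
    also have "\<dots> = ennreal (\<integral>x. d x * indicator B (Y x) \<partial>M)"
    proof (rule nn_integral_eq_integral)
      show "integrable M (\<lambda>x. d x * indicator B (Y x))"
        by (rule Bochner_Integration.integrable_bound[OF integrable_const[of "1::real"]])
          (use bounds in \<open>auto split: split_indicator elim!: AE_mp\<close>)
      show "AE x in M. 0 \<le> d x * indicator B (Y x)"
        using bounds by eventually_elim (auto split: split_indicator)
    qed
    finally show ?thesis .
  qed
  have same_distr: "distr (density M g) N Y = distr (density M h) N Y"
    by (rule measure_eqI)
      (simp_all add: emeasure_distr_density[OF _ _ g_bounds]
        emeasure_distr_density[OF _ _ h_bounds] indicator_eq)
  have "(\<integral>x. g x * f (Y x) \<partial>M) = integral\<^sup>L (distr (density M g) N Y) f"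
    using g_bounds by (subst integral_distr) (auto simp: integral_density elim: AE_mp)
  also have "\<dots> = integral\<^sup>L (distr (density M h) N Y) f"
    by (simp add: same_distr)
  also have "\<dots> = (\<integral>x. h x * f (Y x) \<partial>M)"
    using h_bounds by (subst integral_distr) (auto simp: integral_density elim: AE_mp)
  finally show ?thesis .
qed

context finite_measure_subalgebra
begin

lemma real_cond_exp_indicator_bounds:
  assumes "A \<in> sets M"
  shows "AE x in M. 0 \<le> real_cond_exp M F (indicator A) x \<and> real_cond_exp M F (indicator A) x \<le> 1"
proof -
  have "AE x in M. 0 \<le> real_cond_exp M F (indicator A) x"
    by (rule real_cond_exp_pos) (auto simp: assms borel_measurable_indicator)
  moreover have "AE x in M. real_cond_exp M F (indicator A) x \<le> real_cond_exp M F (\<lambda>_. 1) x"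
    by (rule real_cond_exp_mono)
      (auto simp: assms integrable_indicator_iff less_top[symmetric] emeasure_finite)
  moreover have "AE x in M. real_cond_exp M F (\<lambda>_. 1::real) x = 1"
    by (rule real_cond_exp_F_meas) auto
  ultimately show ?thesis by eventually_elim auto
qed

lemma integral_indicator_mult_real_cond_exp:
  assumes A [measurable]: "A \<in> sets M" and g: "integrable M g"
  shows "(\<integral>x. indicator A x * real_cond_exp M F g x \<partial>M)
       = (\<integral>x. real_cond_exp M F (indicator A) x * g x \<partial>M)"
proof -
  have [measurable]: "g \<in> borel_measurable M" using g by auto
  define h where "h = real_cond_exp M F (indicator A)"
  define c where "c = real_cond_exp M F g"
  have [measurable]: "h \<in> borel_measurable F" "c \<in> borel_measurable F"
    "h \<in> borel_measurable M" "c \<in> borel_measurable M" unfolding h_def c_def by auto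
  have "integrable M c" unfolding c_def using g by auto
  from integrable_mult_indicator[OF A this]
  have int_c: "integrable M (\<lambda>x. c x * indicator A x)" by (simp add: mult.commute)
  have "AE x in M. 0 \<le> h x \<and> h x \<le> 1"
    unfolding h_def by (rule real_cond_exp_indicator_bounds[OF A])
  then have int_hg: "integrable M (\<lambda>x. h x * g x)"
    by (intro Bochner_Integration.integrable_bound[OF g])
      (auto elim!: AE_mp simp: abs_mult intro!: mult_left_le_one_le)
  have "(\<integral>x. indicator A x * c x \<partial>M) = (\<integral>x. c x * indicator A x \<partial>M)"
    by (simp add: mult.commute)
  also have "\<dots> = (\<integral>x. c x * h x \<partial>M)"
    unfolding h_def by (rule real_cond_exp_intg(2)[symmetric]) (use int_c in auto)
  also have "\<dots> = (\<integral>x. h x * c x \<partial>M)" by (simp add: mult.commute)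
  also have "\<dots> = (\<integral>x. h x * g x \<partial>M)"
    unfolding c_def by (rule real_cond_exp_intg(2)) (use int_hg in auto)
  finally show ?thesis unfolding h_def c_def .
qed

end

lemma (in finite_measure) real_cond_exp_comp_eq_of_indicator:
  assumes G: "finite_measure_subalgebra M G" and F: "finite_measure_subalgebra M F"
    and FG: "subalgebra G F"
    and [measurable]: "Y \<in> M \<rightarrow>\<^sub>M N" "f \<in> borel_measurable N"
    and indicator_eq: "\<And>B. B \<in> sets N \<Longrightarrow> AE x in M.
      real_cond_exp M G (\<lambda>x. indicator B (Y x)) x = real_cond_exp M F (\<lambda>x. indicator B (Y x)) x"
    and int_f: "integrable M (\<lambda>x. f (Y x))"
  shows "AE x in M. real_cond_exp M G (\<lambda>x. f (Y x)) x = real_cond_exp M F (\<lambda>x. f (Y x)) x"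
proof -
  interpret G: finite_measure_subalgebra M G by fact
  interpret F: finite_measure_subalgebra M F by fact
  show ?thesis
  proof (rule G.real_cond_exp_charact)
    show "real_cond_exp M F (\<lambda>x. f (Y x)) \<in> borel_measurable G"
      by (rule measurable_from_subalg[OF FG]) simp
    fix A assume AG: "A \<in> sets G"
    then have A [measurable]: "A \<in> sets M" using G.subalg unfolding subalgebra_def by auto
    define h where "h = real_cond_exp M F (indicator A)"
    have [measurable]: "h \<in> borel_measurable M" unfolding h_def by simp
    have eq_on_indicators: "(\<integral>x. indicator A x * indicator B (Y x) \<partial>M) = (\<integral>x. h x * indicator B (Y x) \<partial>M)"
      if B [measurable]: "B \<in> sets N" for B
    proof -
      have int_B: "integrable M (\<lambda>x. indicator B (Y x) :: real)"
        by (rule integrable_const_bound[where B=1]) (auto split: split_indicator)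
      have "(\<integral>x. indicator A x * indicator B (Y x) \<partial>M)
          = (\<integral>x\<in>A. real_cond_exp M G (\<lambda>x. indicator B (Y x)) x \<partial>M)"
        using G.real_cond_exp_intA[OF int_B AG] by (simp add: set_lebesgue_integral_def)
      also have "\<dots> = (\<integral>x. indicator A x * real_cond_exp M F (\<lambda>x. indicator B (Y x)) x \<partial>M)"
        unfolding set_lebesgue_integral_def
        by (rule integral_cong_AE) (use indicator_eq[OF B] in \<open>auto elim!: AE_mp\<close>)
      also have "\<dots> = (\<integral>x. h x * indicator B (Y x) \<partial>M)"
        unfolding h_def by (rule F.integral_indicator_mult_real_cond_exp[OF A int_B])
      finally show ?thesis .
    qed
    have "(\<integral>x. indicator A x * f (Y x) \<partial>M) = (\<integral>x. h x * f (Y x) \<partial>M)"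
    proof (rule integral_density_comp_eq[where g="indicator A" and h=h and Y=Y and f=f])
      show "AE x in M. 0 \<le> h x \<and> h x \<le> 1"
        unfolding h_def by (rule F.real_cond_exp_indicator_bounds[OF A])
    qed (auto intro: finite_measure_axioms eq_on_indicators split: split_indicator)
    also have "\<dots> = (\<integral>x. indicator A x * real_cond_exp M F (\<lambda>x. f (Y x)) x \<partial>M)"
      unfolding h_def by (rule F.integral_indicator_mult_real_cond_exp[OF A int_f, symmetric])
    finally show "(\<integral>x\<in>A. f (Y x) \<partial>M) = (\<integral>x\<in>A. real_cond_exp M F (\<lambda>x. f (Y x)) x \<partial>M)"
      by (simp add: set_lebesgue_integral_def)
  qed (use int_f in auto)
qed

context sigma_finite_subalgebra
begin

lemma real_cond_exp_nested_eq:
  assumes "subalgebra M G" "subalgebra G F" "integrable M f"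
    and "AE x in M. real_cond_exp M G f x = real_cond_exp M H f x"
  shows "AE x in M. real_cond_exp M F f x = real_cond_exp M F (real_cond_exp M H f) x"
proof -
  have "AE x in M. real_cond_exp M F (real_cond_exp M G f) x = real_cond_exp M F f x"
    by (rule real_cond_exp_nested_subalg[OF assms(1-3)])
  moreover have "AE x in M. real_cond_exp M F (real_cond_exp M G f) x
      = real_cond_exp M F (real_cond_exp M H f) x"
    by (rule real_cond_exp_cong[OF assms(4)]) auto
  ultimately show ?thesis by eventually_elim simp
qed

lemma real_cond_var_mult:
  assumes [measurable]: "w \<in> borel_measurable F" "Y \<in> borel_measurable M"
    and "integrable M (\<lambda>x. w x * Y x)" "integrable M (\<lambda>x. (w x * Y x)\<^sup>2)"
  shows "AE x in M. real_cond_exp M F (\<lambda>x. (w x * Y x)\<^sup>2) x - (real_cond_exp M F (\<lambda>x. w x * Y x) x)\<^sup>2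
    = (w x)\<^sup>2 * (real_cond_exp M F (\<lambda>x. (Y x)\<^sup>2) x - (real_cond_exp M F Y x)\<^sup>2)"
proof -
  have "AE x in M. real_cond_exp M F (\<lambda>x. w x * Y x) x = w x * real_cond_exp M F Y x"
    by (rule real_cond_exp_mult) (use assms in auto)
  moreover have "AE x in M. real_cond_exp M F (\<lambda>x. (w x)\<^sup>2 * (Y x)\<^sup>2) x
      = (w x)\<^sup>2 * real_cond_exp M F (\<lambda>x. (Y x)\<^sup>2) x"
    by (rule real_cond_exp_mult) (use assms(4) in \<open>auto simp: power_mult_distrib\<close>)
  ultimately show ?thesis
    by eventually_elim (simp add: power_mult_distrib algebra_simps)
qed

text \<open>Law of total variance for a finer conditioning with mean \<open>m\<close> and second moment \<open>q\<close>
  quadratic in \<open>m\<close>; the finer conditioning itself need not be named.\<close>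

lemma real_cond_var_quadratic:
  assumes "integrable M m" "integrable M (\<lambda>x. (m x)\<^sup>2)" "q \<in> borel_measurable M"
    and mean: "AE x in M. real_cond_exp M F Y x = real_cond_exp M F m x"
    and second_moment: "AE x in M. real_cond_exp M F (\<lambda>x. (Y x)\<^sup>2) x = real_cond_exp M F q x"
    and quadratic: "AE x in M. q x = b1 * m x + (1 + b2) * (m x)\<^sup>2"
  shows "AE x in M. real_cond_exp M F (\<lambda>x. (Y x)\<^sup>2) x - (real_cond_exp M F Y x)\<^sup>2
    = real_cond_exp M F Y x * (b1 + b2 * real_cond_exp M F Y x)
      + (1 + b2) * (real_cond_exp M F (\<lambda>x. (m x)\<^sup>2) x - (real_cond_exp M F m x)\<^sup>2)"
proof -
  have "AE x in M. real_cond_exp M F q x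
      = real_cond_exp M F (\<lambda>x. b1 * m x + (1 + b2) * (m x)\<^sup>2) x"
    by (rule real_cond_exp_cong[OF quadratic]) (use assms(1-3) in auto)
  moreover have "AE x in M. real_cond_exp M F (\<lambda>x. b1 * m x + (1 + b2) * (m x)\<^sup>2) x
      = real_cond_exp M F (\<lambda>x. b1 * m x) x + real_cond_exp M F (\<lambda>x. (1 + b2) * (m x)\<^sup>2) x"
    by (rule real_cond_exp_add) (use assms(1,2) in auto)
  moreover have "AE x in M. real_cond_exp M F (\<lambda>x. b1 * m x) x = b1 * real_cond_exp M F m x"
    by (rule real_cond_exp_cmult[OF assms(1)])
  moreover have "AE x in M. real_cond_exp M F (\<lambda>x. (1 + b2) * (m x)\<^sup>2) x
      = (1 + b2) * real_cond_exp M F (\<lambda>x. (m x)\<^sup>2) x"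
    by (rule real_cond_exp_cmult[OF assms(2)])
  ultimately show ?thesis using mean second_moment
    by eventually_elim (simp add: algebra_simps power2_eq_square)
qed

lemma real_cond_var_F_meas:
  assumes "integrable M g" "integrable M (\<lambda>x. (g x)\<^sup>2)" "g \<in> borel_measurable F"
  shows "AE x in M. real_cond_exp M F (\<lambda>x. (g x)\<^sup>2) x - (real_cond_exp M F g x)\<^sup>2 = 0"
proof -
  have "AE x in M. real_cond_exp M F g x = g x" by (rule real_cond_exp_F_meas[OF assms(1,3)])
  moreover have "AE x in M. real_cond_exp M F (\<lambda>x. (g x)\<^sup>2) x = (g x)\<^sup>2"
    by (rule real_cond_exp_F_meas[OF assms(2)]) (use assms(3) in simp)
  ultimately show ?thesis by eventually_elim simp
qed

lemma integrable_real_cond_exp_square: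
  assumes "integrable M Y" "integrable M (\<lambda>x. (Y x)\<^sup>2)"
  shows "integrable M (\<lambda>x. (real_cond_exp M F Y x)\<^sup>2)"
  by (rule integrable_convex_cond_exp[where I=UNIV and q=power2])
    (use assms in \<open>auto simp: convex_power2\<close>)

end

lemma dag_markov_cexp_tower:
  assumes "prob_space M" "is_dag V E" "\<And>k. k \<in> V \<Longrightarrow> X k \<in> borel_measurable M"
    and "dag_markov M V E X" "j \<in> V" "S \<subseteq> nondesc V E j"
    and [measurable]: "f \<in> borel_measurable borel" and int_f: "integrable M (\<lambda>x. f (X j x))"
  shows "AE x in M. cexp M X S (\<lambda>x. f (X j x)) x
    = cexp M X S (cexp M X (parents E j) (\<lambda>x. f (X j x))) x"
proof -
  interpret prob_space M by fact
  have Nd_V: "nondesc V E j \<subseteq> V" unfolding nondesc_def by auto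
  have Pa_Nd: "parents E j \<subseteq> nondesc V E j" by (rule parents_subset_nondesc[OF assms(2)])
  have subalg: "finite_measure_subalgebra M (gen_sigma M X T)" if "T \<subseteq> V" for T
    by (rule finite_measure_subalgebra_gen_sigma) (use assms(3) that in auto)
  interpret S: finite_measure_subalgebra M "gen_sigma M X S"
    by (rule subalg) (use assms(6) Nd_V in auto)
  have [measurable]: "X j \<in> borel_measurable M" using assms(3,5) by auto
  have "AE x in M. real_cond_exp M (gen_sigma M X (nondesc V E j)) (\<lambda>x. f (X j x)) x
      = real_cond_exp M (gen_sigma M X (parents E j)) (\<lambda>x. f (X j x)) x"
    by (rule real_cond_exp_comp_eq_of_indicator[OF subalg subalg subalgebra_gen_sigma_mono[OF Pa_Nd]])
      (use Nd_V Pa_Nd assms(4,5) int_f in \<open>auto simp: dag_markov_def cexp_def\<close>)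
  then show ?thesis unfolding cexp_def
    using subalgebra_gen_sigma_mono[OF assms(6)] subalg[OF Nd_V]
    by (intro S.real_cond_exp_nested_eq[OF _ _ int_f])
      (auto simp: finite_measure_subalgebra.subalg)
qed

lemma cvar_omega_mult_eq:
  assumes "prob_space M" "is_dag V E" and meas: "\<And>k. k \<in> V \<Longrightarrow> X k \<in> borel_measurable M"
    and "dag_markov M V E X" "qvf M V E X b1 b2" "j \<in> V" "S \<subseteq> nondesc V E j"
    and nonzero: "AE x in M. b1 j + b2 j * cexp M X S (X j) x \<noteq> 0"
    and int_X2: "integrable M (\<lambda>x. (X j x)\<^sup>2)"
    and int_wX2: "integrable M (\<lambda>x. (omega M X b1 b2 j S x * X j x)\<^sup>2)"
  shows "AE x in M. cvar M X S (\<lambda>x. omega M X b1 b2 j S x * X j x) x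
    = omega M X b1 b2 j S x * cexp M X S (X j) x
      + (1 + b2 j) * ((omega M X b1 b2 j S x)\<^sup>2 * cvar M X S (cexp M X (parents E j) (X j)) x)"
proof -
  interpret prob_space M by fact
  let ?Pa = "parents E j"
  have S_V: "S \<subseteq> V" "?Pa \<subseteq> V"
    using assms(7) parents_subset_nondesc[OF assms(2)] unfolding nondesc_def by auto
  interpret FS: finite_measure_subalgebra M "gen_sigma M X S"
    by (rule finite_measure_subalgebra_gen_sigma) (use meas S_V in auto)
  interpret FP: finite_measure_subalgebra M "gen_sigma M X ?Pa"
    by (rule finite_measure_subalgebra_gen_sigma) (use meas S_V in auto)
  let ?w = "omega M X b1 b2 j S" and ?m = "cexp M X ?Pa (X j)"
  have [measurable]: "X j \<in> borel_measurable M" using meas assms(6) by auto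
  have w_meas [measurable]: "?w \<in> borel_measurable (gen_sigma M X S)"
    unfolding omega_def cexp_def by measurable
  have [measurable]: "?w \<in> borel_measurable M"
    by (rule measurable_from_subalg[OF FS.subalg w_meas])
  have int_X: "integrable M (X j)"
    by (rule square_integrable_imp_integrable[OF _ int_X2]) simp
  have int_wX: "integrable M (\<lambda>x. ?w x * X j x)"
    by (rule square_integrable_imp_integrable[OF _ int_wX2]) simp
  have tower: "AE x in M. cexp M X S (\<lambda>x. f (X j x)) x = cexp M X S (cexp M X ?Pa (\<lambda>x. f (X j x))) x"
    if "f \<in> borel_measurable borel" "integrable M (\<lambda>x. f (X j x))" for f
    by (rule dag_markov_cexp_tower[OF assms(1-4,6,7) that])
  have "AE x in M. cexp M X ?Pa (\<lambda>x. (X j x)\<^sup>2) x = b1 j * ?m x + (1 + b2 j) * (?m x)\<^sup>2"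
    using assms(5,6) unfolding qvf_def cvar_def by (auto elim!: AE_mp simp: algebra_simps)
  then have var_S: "AE x in M. cexp M X S (\<lambda>x. (X j x)\<^sup>2) x - (cexp M X S (X j) x)\<^sup>2
    = cexp M X S (X j) x * (b1 j + b2 j * cexp M X S (X j) x)
      + (1 + b2 j) * cvar M X S ?m x"
    unfolding cvar_def cexp_def
    using tower[of "\<lambda>y. y"] tower[of power2] int_X int_X2
      FP.integrable_real_cond_exp_square[OF int_X int_X2]
    by (intro FS.real_cond_var_quadratic) (auto simp: cexp_def)
  have "AE x in M. cvar M X S (\<lambda>x. ?w x * X j x) x
    = (?w x)\<^sup>2 * (cexp M X S (\<lambda>x. (X j x)\<^sup>2) x - (cexp M X S (X j) x)\<^sup>2)"
    unfolding cvar_def cexp_def by (rule FS.real_cond_var_mult) (use int_wX int_wX2 in auto)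
  then show ?thesis using var_S nonzero
  proof eventually_elim
    case (elim x)
    let ?mS = "cexp M X S (X j) x" and ?V = "cvar M X S ?m x"
    have w_d: "(?w x)\<^sup>2 * (b1 j + b2 j * ?mS) = ?w x"
      using elim(3) by (simp add: omega_def power2_eq_square)
    have "(?w x)\<^sup>2 * (?mS * (b1 j + b2 j * ?mS) + (1 + b2 j) * ?V)
        = ?mS * ((?w x)\<^sup>2 * (b1 j + b2 j * ?mS)) + (1 + b2 j) * ((?w x)\<^sup>2 * ?V)"
      by (simp add: algebra_simps)
    with elim(1,2) w_d show ?case by simp
  qed
qed

lemma expectation_cvar_omega_mult:
  assumes "prob_space M" "is_dag V E" and meas: "\<And>k. k \<in> V \<Longrightarrow> X k \<in> borel_measurable M"
    and "dag_markov M V E X" "qvf M V E X b1 b2" "j \<in> V" "S \<subseteq> nondesc V E j"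
    and "AE x in M. b1 j + b2 j * cexp M X S (X j) x \<noteq> 0"
    and "integrable M (\<lambda>x. (X j x)\<^sup>2)"
    and int_wX2: "integrable M (\<lambda>x. (omega M X b1 b2 j S x * X j x)\<^sup>2)"
    and int_K: "integrable M (\<lambda>x. (omega M X b1 b2 j S x)\<^sup>2 * cvar M X S (cexp M X (parents E j) (X j)) x)"
  shows "prob_space.expectation M (\<lambda>x. cvar M X S (\<lambda>x. omega M X b1 b2 j S x * X j x) x)
    = prob_space.expectation M (\<lambda>x. omega M X b1 b2 j S x * X j x)
      + (1 + b2 j) * prob_space.expectation M
          (\<lambda>x. (omega M X b1 b2 j S x)\<^sup>2 * cvar M X S (cexp M X (parents E j) (X j)) x)"
proof -
  interpret prob_space M by fact
  have "S \<subseteq> V" using assms(7) unfolding nondesc_def by auto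
  interpret FS: finite_measure_subalgebra M "gen_sigma M X S"
    by (rule finite_measure_subalgebra_gen_sigma) (use meas \<open>S \<subseteq> V\<close> in auto)
  let ?w = "omega M X b1 b2 j S" and ?mS = "cexp M X S (X j)"
  have [measurable]: "X j \<in> borel_measurable M" using meas assms(6) by auto
  have w_meas [measurable]: "?w \<in> borel_measurable (gen_sigma M X S)"
    unfolding omega_def cexp_def by measurable
  have [measurable]: "?w \<in> borel_measurable M"
    by (rule measurable_from_subalg[OF FS.subalg w_meas])
  have int_wX: "integrable M (\<lambda>x. ?w x * X j x)"
    by (rule square_integrable_imp_integrable[OF _ int_wX2]) simp
  have cexp_wX: "AE x in M. cexp M X S (\<lambda>x. ?w x * X j x) x = ?w x * ?mS x"
    unfolding cexp_def by (rule FS.real_cond_exp_mult) (use int_wX in auto)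
  have int_wmS: "integrable M (\<lambda>x. ?w x * ?mS x)"
    using FS.real_cond_exp_int(1)[OF int_wX] cexp_wX
    by (subst integrable_cong_AE[symmetric]) (auto simp: cexp_def)
  have "(\<integral>x. ?w x * ?mS x \<partial>M) = (\<integral>x. cexp M X S (\<lambda>x. ?w x * X j x) x \<partial>M)"
    by (rule integral_cong_AE) (use cexp_wX in \<open>auto elim!: AE_mp simp: cexp_def\<close>)
  also have "\<dots> = (\<integral>x. ?w x * X j x \<partial>M)"
    unfolding cexp_def by (rule FS.real_cond_exp_int(2)[OF int_wX])
  finally have "(\<integral>x. ?w x * ?mS x \<partial>M) = (\<integral>x. ?w x * X j x \<partial>M)" .
  moreover have "(\<integral>x. cvar M X S (\<lambda>x. ?w x * X j x) x \<partial>M)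
    = (\<integral>x. ?w x * ?mS x + (1 + b2 j) * ((?w x)\<^sup>2 * cvar M X S (cexp M X (parents E j) (X j)) x) \<partial>M)"
    using cvar_omega_mult_eq[OF assms(1-10)] int_wmS int_K
    by (intro integral_cong_AE) (auto simp: cvar_def cexp_def)
  ultimately show ?thesis using int_wmS int_K by simp
qed

lemma cvar_cexp_eq_0_of_subset:
  assumes "prob_space M" "T \<subseteq> S" "\<And>k. k \<in> S \<Longrightarrow> X k \<in> borel_measurable M"
    and "integrable M Y" "integrable M (\<lambda>x. (Y x)\<^sup>2)"
  shows "AE x in M. cvar M X S (cexp M X T Y) x = 0"
proof -
  interpret prob_space M by fact
  interpret FS: finite_measure_subalgebra M "gen_sigma M X S"
    by (rule finite_measure_subalgebra_gen_sigma) (use assms(3) in auto)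
  interpret FT: finite_measure_subalgebra M "gen_sigma M X T"
    by (rule finite_measure_subalgebra_gen_sigma) (use assms(2,3) in auto)
  show ?thesis unfolding cvar_def cexp_def
    using FT.integrable_real_cond_exp_square[OF assms(4,5)] assms(4)
    by (intro FS.real_cond_var_F_meas measurable_from_subalg[OF subalgebra_gen_sigma_mono[OF assms(2)]])
      auto
qed

theorem lemma1:
  fixes M :: "'a measure" and p :: nat and E :: "(nat \<times> nat) set"
    and X :: "nat \<Rightarrow> 'a \<Rightarrow> real" and b1 b2 :: "nat \<Rightarrow> real" and j :: nat
  assumes "prob_space M"
    and "is_dag {1..p} E"
    and "\<And>k. k \<in> {1..p} \<Longrightarrow> X k \<in> borel_measurable M"
    and "dag_markov M {1..p} E X"
    and "qvf M {1..p} E X b1 b2"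
    and "condition1 M {1..p} E X b1 b2"
    \<comment> \<open>finiteness of the moments appearing\<close>
    and "\<And>k. k \<in> {1..p} \<Longrightarrow> integrable M (\<lambda>x. (X k x)\<^sup>2)"
    and "\<And>S. S \<subseteq> nondesc {1..p} E j \<Longrightarrow>
           integrable M (\<lambda>x. (omega M X b1 b2 j S x * X j x)\<^sup>2)"
    and "\<And>S. S \<subseteq> nondesc {1..p} E j \<Longrightarrow>
           integrable M (\<lambda>x. (omega M X b1 b2 j S x)\<^sup>2
              * cvar M X S (cexp M X (parents E j) (X j)) x)"
    and "j \<in> {1..p}"
    and "b2 j > -1"
    and "S \<subseteq> nondesc {1..p} E j"
  shows "prob_space.expectation M (\<lambda>x. cvar M X S (\<lambda>w. omega M X b1 b2 j S w * X j w) x)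
           \<ge> prob_space.expectation M (\<lambda>x. omega M X b1 b2 j S x * X j x)
       \<and> (prob_space.expectation M (\<lambda>x. cvar M X S (\<lambda>w. omega M X b1 b2 j S w * X j w) x)
           = prob_space.expectation M (\<lambda>x. omega M X b1 b2 j S x * X j x)
          \<longleftrightarrow> parents E j \<subseteq> S)"
proof -
  interpret prob_space M by fact
  define K where "K = expectation (\<lambda>x. (omega M X b1 b2 j S x)\<^sup>2
    * cvar M X S (cexp M X (parents E j) (X j)) x)"
  have nonzero: "AE x in M. b1 j + b2 j * cexp M X S (X j) x \<noteq> 0"
    and K_pos: "\<not> parents E j \<subseteq> S \<Longrightarrow> K > 0"
    using assms(6,10,12) unfolding condition1_def K_def by auto
  have decomp: "expectation (\<lambda>x. cvar M X S (\<lambda>w. omega M X b1 b2 j S w * X j w) x)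
    = expectation (\<lambda>x. omega M X b1 b2 j S x * X j x) + (1 + b2 j) * K"
    unfolding K_def
    by (rule expectation_cvar_omega_mult[OF assms(1-5,10,12) nonzero assms(7)[OF assms(10)]
          assms(8,9)[OF assms(12)]])
  have K_zero: "K = 0" if "parents E j \<subseteq> S"
  proof -
    have "S \<subseteq> {1..p}" using assms(12) unfolding nondesc_def by auto
    moreover have "integrable M (X j)"
      by (rule square_integrable_imp_integrable) (use assms(3,7,10) in auto)
    ultimately have "AE x in M. cvar M X S (cexp M X (parents E j) (X j)) x = 0"
      using assms(1,3,7,10) that by (intro cvar_cexp_eq_0_of_subset) auto
    then have "K = expectation (\<lambda>_. 0)"
      unfolding K_def using borel_measurable_integrable[OF assms(9)[OF assms(12)]]
      by (intro integral_cong_AE) (auto elim!: AE_mp)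
    then show ?thesis by simp
  qed
  show ?thesis
    using decomp K_pos K_zero \<open>b2 j > -1\<close> by (cases "parents E j \<subseteq> S") auto
qed

end
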